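(* Let $d\ge2$, $p\ge1$ and $k\in\mathbb{N}$ with $k\ge d^{6p}$. Define $\phi:\mathcal{C}_k^{(d)}\to\mathbb{R}$ by $$\phi(T):=1-\prod_{m=1}^\infty\frac{N_{\le m(p-1)}(T)}{dk+1}.$$ Then for every $T\in\mathcal{C}_k^{(d)}$, $|1-\phi(T)|\le\exp(-c_{d,p}\log^2k)$, where $c_{d,p}:=(4p\log d)^{-1}$.
   Context: A $d$-Catalan tree is a rooted planar tree in which each vertex has $0$ or $d$ children; $\mathcal{C}_k^{(d)}$ is the set of those with $k$ internal vertices (so $dk+1$ vertices in total). $N_j(T)$ is the number of vertices at distance $j$ from the root and $N_{\le q}(T)=\sum_{0\le j\le q}N_j(T)$. *)

theory Defs
  imports Complex_Main
begin

datatype ptree = Node "ptree list"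

fun dcatalan :: "nat \<Rightarrow> ptree \<Rightarrow> bool" where
  "dcatalan d (Node ts) = ((ts = [] \<or> length ts = d) \<and> (\<forall>t\<in>set ts. dcatalan d t))"

fun internal :: "ptree \<Rightarrow> nat" where
  "internal (Node ts) = (if ts = [] then 0 else 1) + sum_list (map internal ts)"

fun level :: "ptree \<Rightarrow> nat \<Rightarrow> nat" where
  "level (Node ts) 0 = 1"
| "level (Node ts) (Suc j) = sum_list (map (\<lambda>t. level t j) ts)"

definition N_le :: "ptree \<Rightarrow> nat \<Rightarrow> nat" where
  "N_le T q = (\<Sum>j\<le>q. level T j)"

definition phi :: "nat \<Rightarrow> nat \<Rightarrow> nat \<Rightarrow> ptree \<Rightarrow> real" where
  "phi d p k T = 1 - lim (\<lambda>n. \<Prod>m\<in>{1..n}. real (N_le T (m * (p - 1))) / real (d * k + 1))"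

end

theory Submission
  imports Defs
begin

text \<open>Every factor of the product is at most 1, and since \<open>N_le T q \<le> d^(q+1)\<close> the
  m-th factor is at most \<open>d^(m(p-1))/k = exp(m(p-1)\<lambda> - K)\<close> with \<open>\<lambda> = ln d\<close>, \<open>K = ln k\<close>.
  So the infinite product is bounded by its partial product up to \<open>M = \<lfloor>K/(p\<lambda>)\<rfloor>\<close>, whose
  logarithm \<open>\<lambda>(p-1)M(M+1)/2 - MK\<close> is at most \<open>-K\<^sup>2/(4p\<lambda>)\<close> once \<open>K \<ge> 6p\<lambda>\<close>.\<close>

fun num_vertices :: "ptree \<Rightarrow> nat" where
  "num_vertices (Node ts) = 1 + sum_list (map num_vertices ts)"

lemma num_vertices_dcatalan:
  assumes "dcatalan d T"
  shows "num_vertices T = d * internal T + 1"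
  using assms
proof (induction T)
  case (Node ts)
  show ?case
  proof (cases "ts = []")
    case True
    then show ?thesis by simp
  next
    case False
    then have len: "length ts = d"
      using Node.prems by auto
    have "sum_list (map num_vertices ts) = sum_list (map (\<lambda>t. d * internal t + 1) ts)"
      using Node by (intro arg_cong[where f = sum_list] map_cong) auto
    also have "\<dots> = d * sum_list (map internal ts) + length ts"
      by (induction ts) (auto simp: algebra_simps)
    finally show ?thesis
      using False len by (simp add: algebra_simps)
  qed
qed

lemma N_le_Suc_Node:
  "N_le (Node ts) (Suc j) = 1 + sum_list (map (\<lambda>t. N_le t j) ts)"
proof -
  have "N_le (Node ts) (Suc j) = 1 + (\<Sum>i\<le>j. sum_list (map (\<lambda>t. level t i) ts))"
    unfolding N_le_def by (subst sum.atMost_Suc_shift) simp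
  also have "(\<Sum>i\<le>j. sum_list (map (\<lambda>t. level t i) ts)) = sum_list (map (\<lambda>t. N_le t j) ts)"
    by (induction ts) (auto simp: sum.distrib N_le_def)
  finally show ?thesis .
qed

lemma N_le_le_num_vertices: "N_le T j \<le> num_vertices T"
proof (induction T arbitrary: j)
  case (Node ts)
  show ?case
  proof (cases j)
    case 0
    then show ?thesis by (simp add: N_le_def)
  next
    case (Suc i)
    have "sum_list (map (\<lambda>t. N_le t i) ts) \<le> sum_list (map num_vertices ts)"
      using Node.IH by (intro sum_list_mono) auto
    then show ?thesis
      using Suc by (simp add: N_le_Suc_Node)
  qed
qed

lemma level_dcatalan_le_power:
  assumes "dcatalan d T"
  shows "level T j \<le> d ^ j"
  using assms
proof (induction T arbitrary: j)
  case (Node ts)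
  show ?case
  proof (cases j)
    case 0
    then show ?thesis by simp
  next
    case (Suc i)
    have "sum_list (map (\<lambda>t. level t i) ts) \<le> sum_list (map (\<lambda>t. d ^ i) ts)"
      using Node by (intro sum_list_mono) auto
    also have "\<dots> = length ts * d ^ i"
      by (simp add: sum_list_triv)
    also have "\<dots> \<le> d * d ^ i"
      using Node.prems by auto
    finally show ?thesis
      using Suc by simp
  qed
qed

lemma sum_powers_le_power_Suc:
  fixes d :: nat
  assumes "d \<ge> 2"
  shows "(\<Sum>i\<le>j. d ^ i) \<le> d ^ Suc j"
proof (induction j)
  case 0
  then show ?case using assms by simp
next
  case (Suc j)
  have "(\<Sum>i\<le>Suc j. d ^ i) \<le> 2 * d ^ Suc j"
    using Suc by simp
  also have "\<dots> \<le> d ^ Suc (Suc j)"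
    using assms by simp
  finally show ?case .
qed

lemma N_le_dcatalan_le_power:
  assumes "dcatalan d T" and "d \<ge> 2"
  shows "N_le T j \<le> d ^ Suc j"
proof -
  have "N_le T j \<le> (\<Sum>i\<le>j. d ^ i)"
    unfolding N_le_def using assms(1) by (intro sum_mono level_dcatalan_le_power)
  also have "\<dots> \<le> d ^ Suc j"
    using assms(2) by (rule sum_powers_le_power_Suc)
  finally show ?thesis .
qed

lemma N_le_fraction_le_exp:
  assumes "dcatalan d T" and "internal T = k" and "d \<ge> 2" and "k \<ge> 1"
  shows "real (N_le T q) / real (d * k + 1) \<le> exp (real q * ln (real d) - ln (real k))"
proof -
  have "real (N_le T q) \<le> real d ^ Suc q"
    using N_le_dcatalan_le_power[OF assms(1,3), of q] by (metis of_nat_le_iff of_nat_power)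
  then have "real (N_le T q) / real (d * k + 1) \<le> real d ^ Suc q / real (d * k)"
    using assms(3,4) by (intro frac_le) simp_all
  also have "\<dots> = real d ^ q / real k"
    using assms(3) by simp
  also have "\<dots> = exp (real q * ln (real d) - ln (real k))"
    using assms(3,4) by (simp add: exp_diff exp_of_nat_mult)
  finally show ?thesis .
qed

lemma lim_prod_bounds:
  fixes f :: "nat \<Rightarrow> real"
  assumes "\<And>m. 0 \<le> f m" and "\<And>m. f m \<le> 1"
  shows "0 \<le> lim (\<lambda>n. \<Prod>m\<in>{1..n}. f m)"
    and "lim (\<lambda>n. \<Prod>m\<in>{1..n}. f m) \<le> (\<Prod>m\<in>{1..M}. f m)"
proof -
  define P where "P n = (\<Prod>m\<in>{1..n}. f m)" for n
  have P_nonneg: "0 \<le> P n" for n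
    unfolding P_def using assms(1) by (simp add: prod_nonneg)
  have "decseq P"
  proof (rule decseq_SucI)
    fix n
    have "P (Suc n) = P n * f (Suc n)"
      unfolding P_def by (simp add: prod.nat_ivl_Suc')
    also have "\<dots> \<le> P n"
      using P_nonneg assms(2) by (simp add: mult_left_le)
    finally show "P (Suc n) \<le> P n" .
  qed
  then obtain L where "P \<longlonglongrightarrow> L" and L_le: "\<And>n. L \<le> P n"
    using decseq_convergent P_nonneg by blast
  then have "lim P = L"
    using limI by blast
  moreover have "0 \<le> L"
    using \<open>P \<longlonglongrightarrow> L\<close> P_nonneg by (intro LIMSEQ_le_const) auto
  ultimately show "0 \<le> lim (\<lambda>n. \<Prod>m\<in>{1..n}. f m)"
    and "lim (\<lambda>n. \<Prod>m\<in>{1..n}. f m) \<le> (\<Prod>m\<in>{1..M}. f m)"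
    using L_le[of M] unfolding P_def by auto
qed

lemma mult_ln_le_ln_if_power_le:
  fixes a b :: real
  assumes "0 < a" and "a ^ n \<le> b"
  shows "real n * ln a \<le> ln b"
proof -
  have "0 < a ^ n"
    using assms(1) by simp
  then have "ln (a ^ n) \<le> ln b"
    using assms(2) by (subst ln_le_cancel_iff) auto
  then show ?thesis
    using assms(1) by (simp add: ln_realpow)
qed

lemma quadratic_at_floor_le:
  fixes x p :: real and M :: nat
  assumes "x \<ge> 6" and "p \<ge> 1" and "x - 1 \<le> real M" and "real M \<le> x"
  shows "(p - 1) * (real M * (real M + 1) / 2) - real M * x * p \<le> - (x\<^sup>2 * p / 4)"
proof -
  have "(p + 1) * (x - 1) / 2 \<le> p * x - (p - 1) * (real M + 1) / 2"
    using assms mult_left_mono[of "real M + 1" "x + 1" "p - 1"] by (simp add: field_simps)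
  then have lower: "(x - 1) * ((p + 1) * (x - 1) / 2) \<le> real M * (p * x - (p - 1) * (real M + 1) / 2)"
    using assms by (intro mult_mono) auto
  have "x\<^sup>2 * p / 4 \<le> (p + 1) * (5/6 * x)\<^sup>2 / 2"
    using assms by (simp add: power2_eq_square field_simps)
  also have "\<dots> \<le> (p + 1) * (x - 1)\<^sup>2 / 2"
    using assms by (intro divide_right_mono mult_left_mono power_mono) auto
  also have "\<dots> = (x - 1) * ((p + 1) * (x - 1) / 2)"
    by (simp add: power2_eq_square)
  also have "\<dots> \<le> real M * (p * x - (p - 1) * (real M + 1) / 2)"
    by (fact lower)
  also have "\<dots> = real M * x * p - (p - 1) * (real M * (real M + 1) / 2)"
    by (simp add: algebra_simps)
  finally show ?thesis
    by linarith
qed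

lemma sum_exponents_le:
  fixes lam K p :: real
  assumes "lam > 0" and "p \<ge> 1" and "K \<ge> 6 * p * lam"
  defines "M \<equiv> nat \<lfloor>K / (p * lam)\<rfloor>"
  shows "(\<Sum>m\<in>{1..M}. real m * (p - 1) * lam - K) \<le> - (1 / (4 * p * lam)) * K\<^sup>2"
proof -
  define x where "x = K / (p * lam)"
  have K_eq: "K = x * p * lam"
    unfolding x_def using assms(1,2) by simp
  have "x \<ge> 6"
    unfolding x_def using assms by (simp add: le_divide_eq mult.commute mult.left_commute)
  moreover have "x - 1 \<le> real M" and "real M \<le> x"
    unfolding M_def x_def[symmetric] using \<open>x \<ge> 6\<close> by linarith+
  ultimately have quadratic: "(p - 1) * (real M * (real M + 1) / 2) - real M * x * p \<le> - (x\<^sup>2 * p / 4)"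
    using assms(2) by (intro quadratic_at_floor_le)
  have "(\<Sum>m\<in>{1..M}. real m * (p - 1) * lam - K)
      = (\<Sum>m\<in>{1..M}. real m) * ((p - 1) * lam) - real M * K"
    by (simp add: sum_subtractf sum_distrib_right mult.assoc)
  also have "\<dots> = lam * ((p - 1) * (real M * (real M + 1) / 2) - real M * x * p)"
    using double_gauss_sum_from_Suc_0[of M, where ?'a = real]
    by (simp add: K_eq algebra_simps)
  also have "\<dots> \<le> lam * - (x\<^sup>2 * p / 4)"
    using quadratic assms(1) by (intro mult_left_mono) auto
  also have "\<dots> = - (1 / (4 * p * lam)) * K\<^sup>2"
    using assms(1,2) by (simp add: K_eq field_simps power2_eq_square)
  finally show ?thesis .
qed

theorem lemma6p4:
  fixes d p k :: nat and T :: ptree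
  assumes "d \<ge> 2" and "p \<ge> 1" and "k \<ge> d ^ (6 * p)"
    and "dcatalan d T" and "internal T = k"
  shows "\<bar>1 - phi d p k T\<bar> \<le> exp (- (1 / (4 * real p * ln (real d))) * (ln (real k))\<^sup>2)"
proof -
  define f where "f m = real (N_le T (m * (p - 1))) / real (d * k + 1)" for m
  define lam where "lam = ln (real d)"
  define K where "K = ln (real k)"
  define M where "M = nat \<lfloor>K / (real p * lam)\<rfloor>"
  have "k \<ge> 1"
    using assms(1,3) by (metis le_trans one_le_power Suc_1 Suc_leD)
  have "f m \<le> 1" for m
    using N_le_le_num_vertices[of T "m * (p - 1)"] num_vertices_dcatalan[OF assms(4)] assms(5)
    unfolding f_def by (simp add: divide_le_eq del: of_nat_add of_nat_mult)
  then have lim_bounds: "0 \<le> 1 - phi d p k T" "1 - phi d p k T \<le> (\<Prod>m\<in>{1..M}. f m)"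
    using lim_prod_bounds(1)[of f] lim_prod_bounds(2)[of f M] unfolding phi_def f_def by auto
  have "f m \<le> exp (real m * (real p - 1) * lam - K)" for m
    using N_le_fraction_le_exp[OF assms(4,5,1) \<open>k \<ge> 1\<close>, where q = "m * (p - 1)"] assms(2)
    unfolding f_def lam_def K_def by (simp add: of_nat_diff)
  then have "(\<Prod>m\<in>{1..M}. f m) \<le> (\<Prod>m\<in>{1..M}. exp (real m * (real p - 1) * lam - K))"
    by (intro prod_mono) (simp add: f_def)
  also have "\<dots> = exp (\<Sum>m\<in>{1..M}. real m * (real p - 1) * lam - K)"
    by (simp add: exp_sum)
  also have "\<dots> \<le> exp (- (1 / (4 * real p * lam)) * K\<^sup>2)"
  proof -
    have "real (6 * p) * lam \<le> K"
      unfolding lam_def K_def using assms(1,3)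
      by (intro mult_ln_le_ln_if_power_le) (simp_all flip: of_nat_power)
    then show ?thesis
      using sum_exponents_le[of lam "real p" K] assms(1,2) unfolding M_def lam_def by simp
  qed
  finally show ?thesis
    using lim_bounds unfolding lam_def K_def by simp
qed

end
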